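(* Let $\alpha\in(0,\pi/2]$ and let $(L,\theta)$ be a minimizer of problem $(\mathcal{P}_\alpha)$ whose curvature at both endpoints satisfies $\theta'(0)\le1$ and $\theta'(L)\le1$ (as is the case when the arc is externally tangent to the unit disk at its endpoints). Then $\theta'(0)=\theta'(L)$, $$\tfrac12\,\theta'(s)^2=\frac{1}{2\sin^2\alpha}\left(\int_0^\alpha\sqrt{\cos t}\,dt\right)^2\cos(\theta(s)-\alpha)\quad\text{for all } s\in[0,L],$$ and the minimal energy is $$E(\alpha):=\frac12\int_0^L\theta'(s)^2\,ds=\frac{1}{\sin\alpha}\left(\int_0^\alpha\sqrt{\cos t}\,dt\right)^2.$$
   Context: For $\alpha\in(0,\pi/2]$ and $L>0$, let $\mathcal{M}_{\alpha,L}$ be the set of $\theta\in H^1(0,L)$ with $\theta'\ge 0$ a.e., $\theta(0)=0$, $\theta(L)=2\alpha$, $\int_0^L\cos\theta(u)\,du=\sin2\alpha$ and $\int_0^L\sin\theta(u)\,du=1-\cos2\alpha$ ($\theta$ is the tangent angle of a convex arc parametrized by arc length from $(0,-1)$ to $(\sin2\alpha,-\cos2\alpha)$, and $\theta'$ is its curvature). Problem $(\mathcal{P}_\alpha)$ is to minimize $\frac12\int_0^L\theta'(s)^2\,ds$ over all $L>0$ and $\theta\in\mathcal{M}_{\alpha,L}$. *)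

theory Defs
  imports "HOL-Analysis.Analysis"
begin

text \<open>H^1(0,L) with weak derivative g: theta is the primitive of a square-integrable g.\<close>
definition H1_with_deriv :: "real \<Rightarrow> (real \<Rightarrow> real) \<Rightarrow> (real \<Rightarrow> real) \<Rightarrow> bool" where
  "H1_with_deriv L \<theta> g \<longleftrightarrow>
     g \<in> borel_measurable lborel \<and>
     set_integrable lborel {0..L} g \<and>
     set_integrable lborel {0..L} (\<lambda>t. (g t)\<^sup>2) \<and>
     (\<forall>x\<in>{0..L}. \<theta> x = \<theta> 0 + (LBINT t=0..x. g t))"

definition admissible :: "real \<Rightarrow> real \<Rightarrow> (real \<Rightarrow> real) \<Rightarrow> (real \<Rightarrow> real) \<Rightarrow> bool" where
  "admissible \<alpha> L \<theta> g \<longleftrightarrow>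
     H1_with_deriv L \<theta> g \<and>
     (AE t in lborel. t \<in> {0..L} \<longrightarrow> g t \<ge> 0) \<and>
     \<theta> 0 = 0 \<and> \<theta> L = 2 * \<alpha> \<and>
     (LBINT u=0..L. cos (\<theta> u)) = sin (2 * \<alpha>) \<and>
     (LBINT u=0..L. sin (\<theta> u)) = 1 - cos (2 * \<alpha>)"

definition energy :: "real \<Rightarrow> (real \<Rightarrow> real) \<Rightarrow> real" where
  "energy L g = (1/2) * (LBINT s=0..L. (g s)\<^sup>2)"

definition is_minimizer :: "real \<Rightarrow> real \<Rightarrow> (real \<Rightarrow> real) \<Rightarrow> bool" where
  "is_minimizer \<alpha> L \<theta> \<longleftrightarrow> L > 0 \<and>
     (\<exists>g. admissible \<alpha> L \<theta> g \<and>
        (\<forall>L' \<theta>' g'. L' > 0 \<and> admissible \<alpha> L' \<theta>' g' \<longrightarrow> energy L g \<le> energy L' g'))"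

end

theory Submission
  imports Defs
begin

(*
  For an admissible curve with curvature g >= 0, the substitution t = theta(s) gives
  int g sqrt (cos (theta - alpha)) ds = int_0^(2 alpha) sqrt (cos (t - alpha)) dt =: K, and the
  chord conditions, rotated by alpha, give int cos (theta - alpha) ds = 2 sin alpha.  Expanding the
  square with c = K / (2 sin alpha) therefore yields
    int (g - c sqrt (cos (theta - alpha)))^2 ds = 2 E - 2 c^2 sin alpha,
  so E >= c^2 sin alpha, with equality iff theta' = c sqrt (cos (theta - alpha)) almost everywhere.
  A solution of this equation running from 0 to 2 alpha is admissible and attains the bound, hence
  every minimizer solves it, and the stated formulas follow from K = 2 int_0^alpha sqrt (cos t) dt.
*)

section \<open>Substitution along a monotone primitive\<close>

lemma increments_le_imp_abs_diff_le:
  fixes \<Phi> \<theta> :: "real \<Rightarrow> real"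
  assumes "a \<le> b" "\<delta> > 0"
    and small: "\<And>x y. a \<le> x \<Longrightarrow> x \<le> y \<Longrightarrow> y \<le> b \<Longrightarrow> y - x < \<delta> \<Longrightarrow>
                  \<bar>\<Phi> y - \<Phi> x\<bar> \<le> e * (\<theta> y - \<theta> x)"
  shows "\<bar>\<Phi> b - \<Phi> a\<bar> \<le> e * (\<theta> b - \<theta> a)"
proof -
  obtain n :: nat where n: "(b - a) / \<delta> < n" using reals_Archimedean2 by blast
  have "0 \<le> (b - a) / \<delta>" using assms(1,2) by simp
  with n have "n > 0" by linarith
  define x where "x k = a + real k * (b - a) / n" for k
  have step: "\<bar>\<Phi> (x (Suc k)) - \<Phi> (x k)\<bar> \<le> e * (\<theta> (x (Suc k)) - \<theta> (x k))" if "k < n" for k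
  proof (rule small)
    have "real (Suc k) * (b - a) \<le> real n * (b - a)"
      using that \<open>a \<le> b\<close> by (intro mult_right_mono) auto
    then show "x (Suc k) \<le> b" using \<open>n > 0\<close> by (simp add: x_def field_simps)
    show "a \<le> x k" "x k \<le> x (Suc k)"
      using \<open>a \<le> b\<close> by (simp_all add: x_def divide_right_mono mult_right_mono)
    have "x (Suc k) - x k = (b - a) / n" using \<open>n > 0\<close> by (simp add: x_def field_simps)
    also have "\<dots> < \<delta>" using n \<open>n > 0\<close> \<open>\<delta> > 0\<close> by (simp add: pos_divide_less_eq mult.commute)
    finally show "x (Suc k) - x k < \<delta>" .
  qed
  have ends: "x n = b" "x 0 = a" using \<open>n > 0\<close> by (auto simp: x_def)
  have "\<bar>\<Phi> b - \<Phi> a\<bar> = \<bar>\<Sum>k<n. \<Phi> (x (Suc k)) - \<Phi> (x k)\<bar>"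
    by (simp add: sum_lessThan_telescope[of "\<lambda>k. \<Phi> (x k)"] ends)
  also have "\<dots> \<le> (\<Sum>k<n. e * (\<theta> (x (Suc k)) - \<theta> (x k)))"
    by (rule order_trans[OF sum_abs sum_mono]) (use step in auto)
  also have "\<dots> = e * (\<theta> b - \<theta> a)"
    by (simp add: sum_distrib_left[symmetric] sum_lessThan_telescope[of "\<lambda>k. \<theta> (x k)"] ends)
  finally show ?thesis .
qed

lemma eq_if_increments_dominated:
  fixes \<Phi> \<theta> :: "real \<Rightarrow> real"
  assumes "a \<le> b"
    and dom: "\<And>e. e > 0 \<Longrightarrow> \<exists>\<delta>>0. \<forall>x y. a \<le> x \<longrightarrow> x \<le> y \<longrightarrow> y \<le> b \<longrightarrow> y - x < \<delta> \<longrightarrow>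
                 \<bar>\<Phi> y - \<Phi> x\<bar> \<le> e * (\<theta> y - \<theta> x)"
  shows "\<Phi> b = \<Phi> a"
proof -
  have bound: "\<bar>\<Phi> b - \<Phi> a\<bar> \<le> e * (\<theta> b - \<theta> a)" if "e > 0" for e
    using dom[OF that] increments_le_imp_abs_diff_le[OF \<open>a \<le> b\<close>] by blast
  have "\<bar>\<Phi> b - \<Phi> a\<bar> \<le> 0"
  proof (cases "\<theta> b - \<theta> a > 0")
    case True
    show ?thesis
    proof (rule field_le_epsilon)
      fix e :: real assume "e > 0"
      then show "\<bar>\<Phi> b - \<Phi> a\<bar> \<le> 0 + e"
        using bound[of "e / (\<theta> b - \<theta> a)"] True by simp
    qed
  next
    case False
    then show ?thesis using bound[of 1] by simp
  qed
  then show ?thesis by simp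
qed

lemma primitive_diff:
  fixes g \<theta> :: "real \<Rightarrow> real"
  assumes g: "g integrable_on {a..b}"
    and \<theta>: "\<And>x. x \<in> {a..b} \<Longrightarrow> \<theta> x = \<theta> a + integral {a..x} g"
    and "a \<le> x" "x \<le> y" "y \<le> b"
  shows "\<theta> y - \<theta> x = integral {x..y} g"
proof -
  have "integral {a..x} g + integral {x..y} g = integral {a..y} g"
    by (rule Henstock_Kurzweil_Integration.integral_combine)
       (use assms(3-5) integrable_on_subinterval[OF g] in auto)
  moreover have "\<theta> x = \<theta> a + integral {a..x} g" "\<theta> y = \<theta> a + integral {a..y} g"
    using \<theta>[of x] \<theta>[of y] assms(3-5) by auto
  ultimately show ?thesis by simp
qed

lemma primitive_continuous:
  fixes g \<theta> :: "real \<Rightarrow> real"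
  assumes g: "g integrable_on {a..b}"
    and \<theta>: "\<And>x. x \<in> {a..b} \<Longrightarrow> \<theta> x = \<theta> a + integral {a..x} g"
  shows "continuous_on {a..b} \<theta>"
proof -
  have "continuous_on {a..b} (\<lambda>x. \<theta> a + integral {a..x} g)"
    by (intro continuous_intros indefinite_integral_continuous_1 g)
  then show ?thesis by (rule continuous_on_eq) (metis \<theta>)
qed

lemma primitive_nonneg_mono:
  fixes g \<theta> :: "real \<Rightarrow> real"
  assumes g: "g integrable_on {a..b}" "\<And>s. s \<in> {a..b} \<Longrightarrow> 0 \<le> g s"
    and \<theta>: "\<And>x. x \<in> {a..b} \<Longrightarrow> \<theta> x = \<theta> a + integral {a..x} g"
    and "a \<le> x" "x \<le> y" "y \<le> b"
  shows "\<theta> x \<le> \<theta> y"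
proof -
  have "0 \<le> integral {x..y} g"
    by (rule integral_nonneg) (use assms(4-6) g integrable_on_subinterval[OF g(1), of x y] in auto)
  then show ?thesis using primitive_diff[OF g(1) \<theta> assms(4-6)] by simp
qed

lemma integral_comp_increment_estimate:
  fixes g \<theta> w :: "real \<Rightarrow> real"
  assumes "x \<le> y" and g: "g integrable_on {x..y}" "\<And>s. s \<in> {x..y} \<Longrightarrow> 0 \<le> g s"
    and \<theta>_diff: "\<theta> y - \<theta> x = integral {x..y} g"
    and \<theta>_range: "\<And>s. s \<in> {x..y} \<Longrightarrow> \<theta> s \<in> {\<theta> x..\<theta> y}"
    and wg: "(\<lambda>s. w (\<theta> s) * g s) integrable_on {x..y}"
    and w: "continuous_on {\<theta> x..\<theta> y} w"
    and osc: "\<And>t. t \<in> {\<theta> x..\<theta> y} \<Longrightarrow> \<bar>w t - w (\<theta> x)\<bar> \<le> e"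
  shows "\<bar>integral {x..y} (\<lambda>s. w (\<theta> s) * g s) - integral {\<theta> x..\<theta> y} w\<bar> \<le> 2 * e * (\<theta> y - \<theta> x)"
proof -
  define p where "p = w (\<theta> x)"
  have "\<theta> x \<le> \<theta> y" using \<theta>_range[of y] \<open>x \<le> y\<close> by auto
  have wi: "w integrable_on {\<theta> x..\<theta> y}" by (rule integrable_continuous_real[OF w])
  have "norm (integral {x..y} (\<lambda>s. (w (\<theta> s) - p) * g s)) \<le> integral {x..y} (\<lambda>s. e * g s)"
  proof (rule Henstock_Kurzweil_Integration.integral_norm_bound_integral)
    show "(\<lambda>s. (w (\<theta> s) - p) * g s) integrable_on {x..y}"
      using integrable_diff[OF wg integrable_on_mult_right[OF g(1), of p]]
      by (simp add: algebra_simps)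
    show "(\<lambda>s. e * g s) integrable_on {x..y}" by (rule integrable_on_mult_right[OF g(1)])
    show "norm ((w (\<theta> s) - p) * g s) \<le> e * g s" if "s \<in> {x..y}" for s
      using osc[OF \<theta>_range[OF that]] g(2)[OF that]
      by (simp add: p_def abs_mult mult_right_mono)
  qed
  moreover have "integral {x..y} (\<lambda>s. (w (\<theta> s) - p) * g s)
      = integral {x..y} (\<lambda>s. w (\<theta> s) * g s) - p * (\<theta> y - \<theta> x)"
    using integral_diff[OF wg integrable_on_mult_right[OF g(1), of p]] \<theta>_diff
    by (simp add: algebra_simps)
  ultimately have near_wg: "\<bar>integral {x..y} (\<lambda>s. w (\<theta> s) * g s) - p * (\<theta> y - \<theta> x)\<bar> \<le> e * (\<theta> y - \<theta> x)"
    using \<theta>_diff by simp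
  have "norm (integral {\<theta> x..\<theta> y} (\<lambda>t. w t - p)) \<le> integral {\<theta> x..\<theta> y} (\<lambda>t. e)"
    by (rule Henstock_Kurzweil_Integration.integral_norm_bound_integral)
       (use integrable_diff[OF wi integrable_const_ivl[of p]] osc in \<open>auto simp: p_def\<close>)
  moreover have "integral {\<theta> x..\<theta> y} (\<lambda>t. w t - p) = integral {\<theta> x..\<theta> y} w - p * (\<theta> y - \<theta> x)"
    using integral_diff[OF wi integrable_const_ivl[of p]] \<open>\<theta> x \<le> \<theta> y\<close> by (simp add: mult.commute)
  ultimately have near_w: "\<bar>integral {\<theta> x..\<theta> y} w - p * (\<theta> y - \<theta> x)\<bar> \<le> e * (\<theta> y - \<theta> x)"
    using \<open>\<theta> x \<le> \<theta> y\<close> by (simp add: mult.commute)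
  from near_wg near_w show ?thesis by linarith
qed

lemma integrable_continuous_mult_nonneg:
  fixes h g :: "real \<Rightarrow> real"
  assumes h: "continuous_on {a..b} h" and g: "g integrable_on {a..b}" "\<And>s. s \<in> {a..b} \<Longrightarrow> 0 \<le> g s"
  shows "(\<lambda>s. h s * g s) integrable_on {a..b}"
proof -
  have "(\<lambda>s. h s * g s) absolutely_integrable_on {a..b}"
  proof (rule absolutely_integrable_bounded_measurable_product_real)
    show "h \<in> borel_measurable (lebesgue_on {a..b})"
      by (rule continuous_imp_measurable_on_sets_lebesgue[OF h]) auto
    show "bounded (h ` {a..b})"
      by (rule compact_imp_bounded, rule compact_continuous_image[OF h]) auto
    show "g absolutely_integrable_on {a..b}"
      by (rule nonnegative_absolutely_integrable_1[OF g])
  qed auto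
  then show ?thesis using set_lebesgue_integral_eq_integral(1) by blast
qed

lemma integral_comp_primitive_increments:
  fixes g \<theta> w :: "real \<Rightarrow> real"
  assumes g: "g integrable_on {a..b}" "\<And>s. s \<in> {a..b} \<Longrightarrow> 0 \<le> g s"
    and \<theta>: "\<And>x. x \<in> {a..b} \<Longrightarrow> \<theta> x = \<theta> a + integral {a..x} g"
    and w: "continuous_on {\<theta> a..\<theta> b} w" and "e > 0"
  obtains \<delta> where "\<delta> > 0"
    "\<And>x y. a \<le> x \<Longrightarrow> x \<le> y \<Longrightarrow> y \<le> b \<Longrightarrow> y - x < \<delta> \<Longrightarrow>
       \<bar>integral {x..y} (\<lambda>s. w (\<theta> s) * g s) - integral {\<theta> x..\<theta> y} w\<bar> \<le> e * (\<theta> y - \<theta> x)"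
proof -
  note \<theta>_mono = primitive_nonneg_mono[OF g \<theta>]
  have \<theta>_cont: "continuous_on {a..b} \<theta>" by (rule primitive_continuous[OF g(1) \<theta>])
  have "uniformly_continuous_on {\<theta> a..\<theta> b} w"
    by (rule compact_uniformly_continuous[OF w]) auto
  then obtain \<delta>w where "\<delta>w > 0" and \<delta>w: "\<And>t t'. t \<in> {\<theta> a..\<theta> b} \<Longrightarrow> t' \<in> {\<theta> a..\<theta> b} \<Longrightarrow>
      dist t' t < \<delta>w \<Longrightarrow> dist (w t') (w t) < e / 2"
    unfolding uniformly_continuous_on_def using \<open>e > 0\<close> by (metis half_gt_zero)
  have "uniformly_continuous_on {a..b} \<theta>"
    by (rule compact_uniformly_continuous[OF \<theta>_cont]) auto
  then obtain \<delta> where "\<delta> > 0" and \<delta>: "\<And>x y. x \<in> {a..b} \<Longrightarrow> y \<in> {a..b} \<Longrightarrow>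
      dist y x < \<delta> \<Longrightarrow> dist (\<theta> y) (\<theta> x) < \<delta>w"
    unfolding uniformly_continuous_on_def using \<open>\<delta>w > 0\<close> by metis
  show ?thesis
  proof (rule that[OF \<open>\<delta> > 0\<close>])
    fix x y assume xy: "a \<le> x" "x \<le> y" "y \<le> b" "y - x < \<delta>"
    have \<theta>xy: "\<theta> a \<le> \<theta> x" "\<theta> x \<le> \<theta> y" "\<theta> y \<le> \<theta> b" using \<theta>_mono xy by auto
    have "\<bar>integral {x..y} (\<lambda>s. w (\<theta> s) * g s) - integral {\<theta> x..\<theta> y} w\<bar> \<le> 2 * (e / 2) * (\<theta> y - \<theta> x)"
    proof (rule integral_comp_increment_estimate)
      show "g integrable_on {x..y}" using xy integrable_on_subinterval[OF g(1)] by auto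
      show "\<theta> y - \<theta> x = integral {x..y} g" by (rule primitive_diff[OF g(1) \<theta> xy(1-3)])
      show "\<theta> s \<in> {\<theta> x..\<theta> y}" if "s \<in> {x..y}" for s
        using \<theta>_mono[of x s] \<theta>_mono[of s y] that xy by auto
      show w_cont: "continuous_on {\<theta> x..\<theta> y} w"
        by (rule continuous_on_subset[OF w]) (use \<theta>xy in auto)
      have "continuous_on {x..y} \<theta>" by (rule continuous_on_subset[OF \<theta>_cont]) (use xy in auto)
      with w_cont show "(\<lambda>s. w (\<theta> s) * g s) integrable_on {x..y}"
        using \<open>g integrable_on {x..y}\<close> g(2) \<theta>_mono xy
        by (intro integrable_continuous_mult_nonneg continuous_on_compose2[OF w_cont]) auto
      show "\<bar>w t - w (\<theta> x)\<bar> \<le> e / 2" if "t \<in> {\<theta> x..\<theta> y}" for t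
      proof -
        have "dist (\<theta> y) (\<theta> x) < \<delta>w" using \<delta>[of x y] xy by (auto simp: dist_real_def)
        then have "dist t (\<theta> x) < \<delta>w" using that by (auto simp: dist_real_def)
        then show ?thesis using \<delta>w[of "\<theta> x" t] that \<theta>xy by (auto simp: dist_real_def)
      qed
    qed (use xy g(2) in auto)
    then show "\<bar>integral {x..y} (\<lambda>s. w (\<theta> s) * g s) - integral {\<theta> x..\<theta> y} w\<bar> \<le> e * (\<theta> y - \<theta> x)"
      by simp
  qed
qed

text \<open>The library's substitution rules need \<open>\<theta>\<close> to be differentiable outside a finite set.\<close>
lemma integral_comp_primitive:
  fixes g \<theta> w :: "real \<Rightarrow> real"
  assumes "a \<le> b" and g: "g integrable_on {a..b}" "\<And>s. s \<in> {a..b} \<Longrightarrow> 0 \<le> g s"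
    and \<theta>: "\<And>x. x \<in> {a..b} \<Longrightarrow> \<theta> x = \<theta> a + integral {a..x} g"
    and w: "continuous_on {\<theta> a..\<theta> b} w"
  shows "(\<lambda>s. w (\<theta> s) * g s) integrable_on {a..b}"
    and "integral {a..b} (\<lambda>s. w (\<theta> s) * g s) = integral {\<theta> a..\<theta> b} w"
proof -
  note \<theta>_mono = primitive_nonneg_mono[OF g \<theta>]
  have "\<theta> ` {a..b} \<subseteq> {\<theta> a..\<theta> b}" using \<theta>_mono by auto
  then show wg: "(\<lambda>s. w (\<theta> s) * g s) integrable_on {a..b}"
    by (intro integrable_continuous_mult_nonneg g continuous_on_compose2[OF w]
        primitive_continuous[OF g(1) \<theta>])
  define \<Phi> where "\<Phi> x = integral {a..x} (\<lambda>s. w (\<theta> s) * g s) - integral {\<theta> a..\<theta> x} w" for x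
  have "\<Phi> b = \<Phi> a"
  proof (rule eq_if_increments_dominated[OF \<open>a \<le> b\<close>])
    fix e :: real assume "e > 0"
    then obtain \<delta> where "\<delta> > 0" and \<delta>: "\<And>x y. a \<le> x \<Longrightarrow> x \<le> y \<Longrightarrow> y \<le> b \<Longrightarrow> y - x < \<delta> \<Longrightarrow>
        \<bar>integral {x..y} (\<lambda>s. w (\<theta> s) * g s) - integral {\<theta> x..\<theta> y} w\<bar> \<le> e * (\<theta> y - \<theta> x)"
      using integral_comp_primitive_increments[OF g \<theta> w] by metis
    have "\<Phi> y - \<Phi> x = integral {x..y} (\<lambda>s. w (\<theta> s) * g s) - integral {\<theta> x..\<theta> y} w"
      if "a \<le> x" "x \<le> y" "y \<le> b" for x y
    proof -
      have "integral {a..x} (\<lambda>s. w (\<theta> s) * g s) + integral {x..y} (\<lambda>s. w (\<theta> s) * g s)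
          = integral {a..y} (\<lambda>s. w (\<theta> s) * g s)"
        by (rule Henstock_Kurzweil_Integration.integral_combine)
           (use that integrable_on_subinterval[OF wg] in auto)
      moreover have "integral {\<theta> a..\<theta> x} w + integral {\<theta> x..\<theta> y} w = integral {\<theta> a..\<theta> y} w"
        by (rule Henstock_Kurzweil_Integration.integral_combine)
           (use \<theta>_mono that integrable_continuous_real[OF continuous_on_subset[OF w]] in auto)
      ultimately show ?thesis by (simp add: \<Phi>_def)
    qed
    then show "\<exists>\<delta>>0. \<forall>x y. a \<le> x \<longrightarrow> x \<le> y \<longrightarrow> y \<le> b \<longrightarrow> y - x < \<delta> \<longrightarrow>
        \<bar>\<Phi> y - \<Phi> x\<bar> \<le> e * (\<theta> y - \<theta> x)"
      using \<open>\<delta> > 0\<close> \<delta> by auto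
  qed
  then show "integral {a..b} (\<lambda>s. w (\<theta> s) * g s) = integral {\<theta> a..\<theta> b} w"
    by (simp add: \<Phi>_def)
qed

section \<open>The energy bound\<close>

text \<open>If \<open>\<theta>' = c sqrt (cos (\<theta> - \<alpha>))\<close> and \<open>\<theta>\<close> runs from \<open>0\<close> to \<open>2\<alpha>\<close>, substituting
  \<open>t = \<theta> s\<close> turns \<open>c \<integral> cos (\<theta> s - \<alpha>) ds\<close> into \<open>\<integral> sqrt (cos (t - \<alpha>)) dt\<close> over \<open>[0, 2\<alpha>]\<close>; the
  chord condition \<open>\<integral> cos (\<theta> s - \<alpha>) ds = 2 sin \<alpha>\<close> therefore determines \<open>c\<close>.\<close>
definition elastica_const :: "real \<Rightarrow> real" where
  "elastica_const \<alpha> = integral {0..2*\<alpha>} (\<lambda>t. sqrt (cos (t - \<alpha>))) / (2 * sin \<alpha>)"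

lemma interval_integral_0_eq_integral:
  fixes f :: "real \<Rightarrow> real"
  assumes "0 \<le> x" "set_integrable lborel {0..x} f"
  shows "(LBINT t=0..x. f t) = integral {0..x} f"
  using interval_integral_eq_integral[OF assms] by (simp add: zero_ereal_def)

lemma integral_sqrt_cos_shift:
  assumes "0 \<le> \<alpha>"
  shows "integral {0..2*\<alpha>} (\<lambda>t. sqrt (cos (t - \<alpha>))) = 2 * (LBINT t=0..\<alpha>. sqrt (cos t))"
proof -
  define f where "f t = sqrt (cos t)" for t
  have f_cont: "continuous_on A f" for A unfolding f_def by (intro continuous_intros)
  have "integral {0..2*\<alpha>} (f \<circ> (\<lambda>t. t + - \<alpha>)) = integral {0 + - \<alpha>..2*\<alpha> + - \<alpha>} f"
    by (rule integral_shift[OF f_cont])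
  then have "integral {0..2*\<alpha>} (\<lambda>t. sqrt (cos (t - \<alpha>))) = integral {-\<alpha>..\<alpha>} f"
    by (simp add: f_def o_def)
  also have "\<dots> = integral {-\<alpha>..0} f + integral {0..\<alpha>} f"
    by (rule Henstock_Kurzweil_Integration.integral_combine[symmetric])
       (use assms f_cont in \<open>auto intro: integrable_continuous_real\<close>)
  also have "integral {-\<alpha>..0} f = integral {0..\<alpha>} f"
    using Henstock_Kurzweil_Integration.integral_reflect_real[of 0 "-\<alpha>" f] by (simp add: f_def[abs_def])
  also have "integral {0..\<alpha>} f = (LBINT t=0..\<alpha>. sqrt (cos t))"
    using interval_integral_0_eq_integral[OF assms borel_integrable_atLeastAtMost'[OF f_cont]]
    by (simp add: f_def)
  finally show ?thesis by simp
qed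

lemma elastica_const_eq:
  assumes "0 < \<alpha>"
  shows "elastica_const \<alpha> = (LBINT t=0..\<alpha>. sqrt (cos t)) / sin \<alpha>"
  using integral_sqrt_cos_shift[of \<alpha>] assms by (simp add: elastica_const_def)

lemma elastica_const_ge_1:
  assumes "\<alpha> \<in> {0<..pi/2}"
  shows "1 \<le> elastica_const \<alpha>"
proof -
  have "0 < sin \<alpha>" using assms by (intro sin_gt_zero) auto
  have cos_int: "((\<lambda>t. cos (t - \<alpha>)) has_integral 2 * sin \<alpha>) {0..2*\<alpha>}"
  proof -
    have "((\<lambda>t. cos (t - \<alpha>)) has_integral sin (2*\<alpha> - \<alpha>) - sin (0 - \<alpha>)) {0..2*\<alpha>}"
      by (rule fundamental_theorem_of_calculus)
         (use assms in \<open>auto intro!: derivative_eq_intros simp: has_real_derivative_iff_has_vector_derivative[symmetric]\<close>)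
    then show ?thesis by simp
  qed
  have "2 * sin \<alpha> \<le> integral {0..2*\<alpha>} (\<lambda>t. sqrt (cos (t - \<alpha>)))"
  proof (rule has_integral_le[OF cos_int integrable_integral])
    show "(\<lambda>t. sqrt (cos (t - \<alpha>))) integrable_on {0..2*\<alpha>}"
      by (intro integrable_continuous_real continuous_intros)
    fix t assume "t \<in> {0..2*\<alpha>}"
    then have "0 \<le> cos (t - \<alpha>)" using assms by (intro cos_ge_zero) auto
    then show "cos (t - \<alpha>) \<le> sqrt (cos (t - \<alpha>))"
      using cos_le_one[of "t - \<alpha>"] by (intro real_le_rsqrt) (simp add: power2_eq_square mult_left_le)
  qed
  then show ?thesis using \<open>0 < sin \<alpha>\<close> by (simp add: elastica_const_def)
qed

lemma integral_cos_sin_add: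
  fixes \<phi> :: "real \<Rightarrow> real"
  assumes "(\<lambda>s. cos (\<phi> s)) integrable_on S" "(\<lambda>s. sin (\<phi> s)) integrable_on S"
  shows "integral S (\<lambda>s. cos (\<phi> s + \<beta>))
           = cos \<beta> * integral S (\<lambda>s. cos (\<phi> s)) - sin \<beta> * integral S (\<lambda>s. sin (\<phi> s))"
    and "integral S (\<lambda>s. sin (\<phi> s + \<beta>))
           = sin \<beta> * integral S (\<lambda>s. cos (\<phi> s)) + cos \<beta> * integral S (\<lambda>s. sin (\<phi> s))"
proof -
  note integrable = integrable_on_mult_right[OF assms(1)] integrable_on_mult_right[OF assms(2)]
  show "integral S (\<lambda>s. cos (\<phi> s + \<beta>))
           = cos \<beta> * integral S (\<lambda>s. cos (\<phi> s)) - sin \<beta> * integral S (\<lambda>s. sin (\<phi> s))"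
    using integral_diff[OF integrable] by (simp add: cos_add mult.commute)
  show "integral S (\<lambda>s. sin (\<phi> s + \<beta>))
           = sin \<beta> * integral S (\<lambda>s. cos (\<phi> s)) + cos \<beta> * integral S (\<lambda>s. sin (\<phi> s))"
  proof -
    have "(\<lambda>s. sin (\<phi> s + \<beta>)) = (\<lambda>s. cos \<beta> * sin (\<phi> s) + sin \<beta> * cos (\<phi> s))"
      by (simp add: sin_add mult.commute)
    then show ?thesis using integral_add[OF integrable(2,1)] by simp
  qed
qed

lemma integral_nonneg_eq_0_imp_ae_0:
  fixes f :: "real \<Rightarrow> real"
  assumes f: "f integrable_on {a..b}" "\<And>x. x \<in> {a..b} \<Longrightarrow> 0 \<le> f x"
    and "integral {a..b} f = 0"
  obtains N where "negligible N" "\<And>x. x \<in> {a..b} - N \<Longrightarrow> f x = 0"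
proof -
  have f_abs: "f absolutely_integrable_on {a..b}"
    by (rule nonnegative_absolutely_integrable_1[OF f])
  then have "integral\<^sup>L lebesgue (\<lambda>x. indicator {a..b} x *\<^sub>R f x) = 0"
    using set_lebesgue_integral_eq_integral(2)[OF f_abs] assms(3)
    by (simp add: set_lebesgue_integral_def)
  moreover have "integrable lebesgue (\<lambda>x. indicator {a..b} x *\<^sub>R f x)"
    using f_abs by (simp add: set_integrable_def)
  ultimately have "AE x in lebesgue. indicator {a..b} x *\<^sub>R f x = 0"
    by (subst (asm) integral_nonneg_eq_0_iff_AE) (auto simp: indicator_def f(2))
  then obtain N where "negligible N" "{x. indicator {a..b} x *\<^sub>R f x \<noteq> 0} \<subseteq> N"
    unfolding eventually_ae_filter_negligible by blast
  then show ?thesis by (intro that[of N]) (auto simp: indicator_def)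
qed

lemma admissible_primitive:
  assumes adm: "admissible \<alpha> L \<theta> g" and "0 \<le> L"
  shows "(\<lambda>s. max 0 (g s)) integrable_on {0..L}"
    and "(\<lambda>s. (max 0 (g s))\<^sup>2) integrable_on {0..L}"
    and "\<And>x. x \<in> {0..L} \<Longrightarrow> \<theta> x = \<theta> 0 + integral {0..x} (\<lambda>s. max 0 (g s))"
    and "energy L g = integral {0..L} (\<lambda>s. (max 0 (g s))\<^sup>2) / 2"
proof -
  from adm have g: "set_integrable lborel {0..L} g"
    and g2: "set_integrable lborel {0..L} (\<lambda>t. (g t)\<^sup>2)"
    and \<theta>: "\<And>x. x \<in> {0..L} \<Longrightarrow> \<theta> x = \<theta> 0 + (LBINT t=0..x. g t)"
    and g_nonneg: "AE t in lborel. t \<in> {0..L} \<longrightarrow> g t \<ge> 0"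
    unfolding admissible_def H1_with_deriv_def by auto
  from g_nonneg have "AE t in lebesgue. t \<in> {0..L} \<longrightarrow> g t \<ge> 0" by (rule AE_completion)
  then obtain N where "negligible N" and N: "\<And>t. t \<in> {0..L} - N \<Longrightarrow> max 0 (g t) = g t"
    unfolding eventually_ae_filter_negligible by (auto simp: subset_eq) (metis max_def)
  have g_int: "g integrable_on {0..L}" by (rule set_borel_integral_eq_integral(1)[OF g])
  show "(\<lambda>s. max 0 (g s)) integrable_on {0..L}"
    by (rule integrable_spike[OF g_int \<open>negligible N\<close>]) (use N in auto)
  show "(\<lambda>s. (max 0 (g s))\<^sup>2) integrable_on {0..L}"
    by (rule integrable_spike[OF set_borel_integral_eq_integral(1)[OF g2] \<open>negligible N\<close>])
       (use N in auto)
  show "\<theta> x = \<theta> 0 + integral {0..x} (\<lambda>s. max 0 (g s))" if x: "x \<in> {0..L}" for x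
  proof -
    have "set_integrable lborel {0..x} g" by (rule set_integrable_subset[OF g]) (use x in auto)
    then have "(LBINT t=0..x. g t) = integral {0..x} g"
      using interval_integral_0_eq_integral x by auto
    also have "\<dots> = integral {0..x} (\<lambda>s. max 0 (g s))"
      by (rule integral_spike[OF \<open>negligible N\<close>]) (use N x in auto)
    finally show ?thesis using \<theta>[OF x] by simp
  qed
  have "(LBINT t=0..L. (g t)\<^sup>2) = integral {0..L} (\<lambda>t. (g t)\<^sup>2)"
    using interval_integral_0_eq_integral \<open>0 \<le> L\<close> g2 by auto
  also have "\<dots> = integral {0..L} (\<lambda>t. (max 0 (g t))\<^sup>2)"
    by (rule integral_spike[OF \<open>negligible N\<close>]) (use N in auto)
  finally show "energy L g = integral {0..L} (\<lambda>s. (max 0 (g s))\<^sup>2) / 2"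
    by (simp add: energy_def)
qed

lemma admissible_continuous_range:
  assumes adm: "admissible \<alpha> L \<theta> g" and "0 \<le> L"
  shows "continuous_on {0..L} \<theta>"
    and "\<And>s. s \<in> {0..L} \<Longrightarrow> \<theta> s \<in> {0..2*\<alpha>}"
proof -
  note g = admissible_primitive(1)[OF assms] and \<theta> = admissible_primitive(3)[OF assms]
  show "continuous_on {0..L} \<theta>" by (rule primitive_continuous[OF g \<theta>])
  have "\<theta> 0 = 0" "\<theta> L = 2 * \<alpha>" using adm by (auto simp: admissible_def)
  then show "\<theta> s \<in> {0..2*\<alpha>}" if "s \<in> {0..L}" for s
    using primitive_nonneg_mono[OF g _ \<theta>, of 0 s] primitive_nonneg_mono[OF g _ \<theta>, of s L] that
    by auto
qed

lemma admissible_integral_cos_diff: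
  assumes adm: "admissible \<alpha> L \<theta> g" and "0 \<le> L"
  shows "integral {0..L} (\<lambda>s. cos (\<theta> s - \<alpha>)) = 2 * sin \<alpha>"
proof -
  have \<theta>_cont: "continuous_on {0..L} \<theta>" by (rule admissible_continuous_range(1)[OF assms])
  have cont: "continuous_on {0..L} (\<lambda>s. cos (\<theta> s))" "continuous_on {0..L} (\<lambda>s. sin (\<theta> s))"
    by (intro continuous_intros \<theta>_cont)+
  have "(LBINT u=0..L. cos (\<theta> u)) = sin (2 * \<alpha>)" "(LBINT u=0..L. sin (\<theta> u)) = 1 - cos (2 * \<alpha>)"
    using adm by (auto simp: admissible_def)
  then have "integral {0..L} (\<lambda>s. cos (\<theta> s)) = sin (2 * \<alpha>)"
    "integral {0..L} (\<lambda>s. sin (\<theta> s)) = 1 - cos (2 * \<alpha>)"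
    using interval_integral_0_eq_integral[OF \<open>0 \<le> L\<close> borel_integrable_atLeastAtMost'[OF cont(1)]]
      interval_integral_0_eq_integral[OF \<open>0 \<le> L\<close> borel_integrable_atLeastAtMost'[OF cont(2)]]
    by simp_all
  moreover have "sin (2 * \<alpha>) * cos (-\<alpha>) - (1 - cos (2 * \<alpha>)) * sin (-\<alpha>) = 2 * sin \<alpha>"
    unfolding sin_double cos_double_sin cos_minus sin_minus using sin_cos_squared_add[of \<alpha>] by algebra
  ultimately show ?thesis
    using integral_cos_sin_add(1)[of \<theta> "{0..L}" "-\<alpha>"] cont
    by (simp add: integrable_continuous_real mult.commute)
qed

lemma energy_square_defect:
  assumes \<alpha>: "\<alpha> \<in> {0<..pi/2}" and adm: "admissible \<alpha> L \<theta> g" and "0 \<le> L"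
  defines "c \<equiv> elastica_const \<alpha>"
  defines "f \<equiv> \<lambda>s. (max 0 (g s) - c * sqrt (cos (\<theta> s - \<alpha>)))\<^sup>2"
  shows "f integrable_on {0..L}"
    and "energy L g = sin \<alpha> * c\<^sup>2 + integral {0..L} f / 2"
proof -
  define gp where "gp s = max 0 (g s)" for s
  define w where "w t = sqrt (cos (t - \<alpha>))" for t
  note gp = admissible_primitive[OF adm \<open>0 \<le> L\<close>, folded gp_def]
  have "\<theta> 0 = 0" "\<theta> L = 2 * \<alpha>" using adm by (auto simp: admissible_def)
  have w_cont: "continuous_on A w" for A unfolding w_def by (intro continuous_intros)
  have wg: "(\<lambda>s. w (\<theta> s) * gp s) integrable_on {0..L}"
    and "integral {0..L} (\<lambda>s. w (\<theta> s) * gp s) = integral {0..2*\<alpha>} w"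
    using integral_comp_primitive[OF \<open>0 \<le> L\<close> gp(1) _ gp(3) w_cont] \<open>\<theta> 0 = 0\<close> \<open>\<theta> L = 2 * \<alpha>\<close>
    by (auto simp: gp_def)
  moreover have "integral {0..2*\<alpha>} w = 2 * sin \<alpha> * c"
    using \<alpha> sin_gt_zero[of \<alpha>] by (simp add: c_def elastica_const_def w_def[abs_def])
  ultimately have cross: "integral {0..L} (\<lambda>s. w (\<theta> s) * gp s) = 2 * sin \<alpha> * c" by simp
  have cos_int: "(\<lambda>s. cos (\<theta> s - \<alpha>)) integrable_on {0..L}"
    by (intro integrable_continuous_real continuous_intros admissible_continuous_range(1)[OF adm \<open>0 \<le> L\<close>])
  have f_eq: "f s = (gp s)\<^sup>2 - 2 * c * (w (\<theta> s) * gp s) + c\<^sup>2 * cos (\<theta> s - \<alpha>)"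
    if "s \<in> {0..L}" for s
  proof -
    have "0 \<le> cos (\<theta> s - \<alpha>)"
      using admissible_continuous_range(2)[OF adm \<open>0 \<le> L\<close> that] \<alpha> by (intro cos_ge_zero) auto
    then show ?thesis by (simp add: f_def gp_def w_def power2_eq_square algebra_simps)
  qed
  have expanded_int: "(\<lambda>s. (gp s)\<^sup>2 - 2 * c * (w (\<theta> s) * gp s) + c\<^sup>2 * cos (\<theta> s - \<alpha>)) integrable_on {0..L}"
    by (intro integrable_add integrable_diff integrable_on_mult_right gp(2) wg cos_int)
  then show "f integrable_on {0..L}"
    by (rule integrable_spike[where S = "{}"]) (use f_eq in auto)
  have "integral {0..L} f = integral {0..L} (\<lambda>s. (gp s)\<^sup>2 - 2 * c * (w (\<theta> s) * gp s) + c\<^sup>2 * cos (\<theta> s - \<alpha>))"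
    by (rule integral_cong) (rule f_eq)
  also have "\<dots> = 2 * energy L g - 2 * c * (2 * sin \<alpha> * c) + c\<^sup>2 * (2 * sin \<alpha>)"
    using gp(4) cross admissible_integral_cos_diff[OF adm \<open>0 \<le> L\<close>]
    by (simp add: integral_add integral_diff integrable_diff integrable_on_mult_right gp(2) wg cos_int)
  finally show "energy L g = sin \<alpha> * c\<^sup>2 + integral {0..L} f / 2"
    by (simp add: power2_eq_square algebra_simps)
qed

lemma admissible_energy_le_imp_ode:
  assumes \<alpha>: "\<alpha> \<in> {0<..pi/2}" and adm: "admissible \<alpha> L \<theta> g" and "0 \<le> L"
    and energy_le: "energy L g \<le> sin \<alpha> * (elastica_const \<alpha>)\<^sup>2"
    and x: "x \<in> {0..L}"
  shows "\<theta> x = integral {0..x} (\<lambda>s. elastica_const \<alpha> * sqrt (cos (\<theta> s - \<alpha>)))"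
proof -
  define c where "c = elastica_const \<alpha>"
  define f where "f s = (max 0 (g s) - c * sqrt (cos (\<theta> s - \<alpha>)))\<^sup>2" for s
  note defect = energy_square_defect[OF \<alpha> adm \<open>0 \<le> L\<close>, folded c_def, folded f_def[abs_def]]
  have "0 \<le> integral {0..L} f" by (rule integral_nonneg[OF defect(1)]) (simp add: f_def)
  then have "integral {0..L} f = 0" using defect(2) energy_le by (simp add: c_def)
  then obtain N where "negligible N" and N: "\<And>s. s \<in> {0..L} - N \<Longrightarrow> f s = 0"
    using integral_nonneg_eq_0_imp_ae_0[OF defect(1)] by (auto simp: f_def)
  have "\<theta> x = \<theta> 0 + integral {0..x} (\<lambda>s. max 0 (g s))"
    by (rule admissible_primitive(3)[OF adm \<open>0 \<le> L\<close> x])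
  also have "integral {0..x} (\<lambda>s. max 0 (g s)) = integral {0..x} (\<lambda>s. c * sqrt (cos (\<theta> s - \<alpha>)))"
    by (rule integral_spike[OF \<open>negligible N\<close>]) (use N x in \<open>auto simp: f_def\<close>)
  finally show ?thesis using adm by (simp add: c_def admissible_def)
qed

section \<open>A curve attaining the bound\<close>

lemma primitive_strict_mono:
  fixes T :: "real \<Rightarrow> real"
  assumes T: "continuous_on {a..b} T" "\<And>u. u \<in> {a..b} \<Longrightarrow> 0 < T u"
    and "a \<le> x" "x < y" "y \<le> b"
  shows "integral {a..x} T < integral {a..y} T"
proof (rule DERIV_pos_imp_increasing_open[OF \<open>x < y\<close>])
  show "continuous_on {x..y} (\<lambda>u. integral {a..u} T)"
    by (rule continuous_on_subset[OF indefinite_integral_continuous_1[OF integrable_continuous_real[OF T(1)]]])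
       (use assms in auto)
  show "\<exists>d. ((\<lambda>u. integral {a..u} T) has_real_derivative d) (at u) \<and> 0 < d" if "x < u" "u < y" for u
    using integral_has_real_derivative[OF T(1), of u] at_within_Icc_at[of a u b] T(2)[of u] that assms(3-5)
    by auto
qed

lemma inverse_of_primitive_exists:
  fixes T :: "real \<Rightarrow> real"
  assumes "a < b" and T: "continuous_on {a..b} T" "\<And>u. u \<in> {a..b} \<Longrightarrow> 0 < T u"
  obtains L U where "0 < L" "continuous_on {0..L} U" "U 0 = a" "U L = b"
    "\<And>s. s \<in> {0..L} \<Longrightarrow> U s \<in> {a..b}" "\<And>s. s \<in> {0<..<L} \<Longrightarrow> U s \<in> {a<..<b}"
    "\<And>s. s \<in> {0<..<L} \<Longrightarrow> (U has_real_derivative inverse (T (U s))) (at s)"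
proof -
  define S where "S u = integral {a..u} T" for u
  have S_deriv_at: "(S has_real_derivative T u) (at u)" if "u \<in> {a<..<b}" for u
    using integral_has_real_derivative[OF T(1), of u] that at_within_Icc_at[of a u b]
    by (auto simp: S_def[abs_def])
  have S_cont: "continuous_on {a..b} S"
    unfolding S_def by (rule indefinite_integral_continuous_1[OF integrable_continuous_real[OF T(1)]])
  have S_less: "S x < S y" if "a \<le> x" "x < y" "y \<le> b" for x y
    unfolding S_def by (rule primitive_strict_mono[OF T that])
  have S_inj: "inj_on S {a..b}"
    by (rule inj_onI) (metis S_less atLeastAtMost_iff linorder_cases less_irrefl)
  define L where "L = S b"
  have "S a = 0" by (simp add: S_def)
  then have "0 < L" using S_less[of a b] \<open>a < b\<close> by (simp add: L_def)
  have S_image: "S ` {a..b} = {0..L}"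
  proof
    show "S ` {a..b} \<subseteq> {0..L}"
      using S_less \<open>S a = 0\<close> by (force simp: L_def le_less)
    show "{0..L} \<subseteq> S ` {a..b}"
      using IVT'[of S a _ b] S_cont \<open>a < b\<close> \<open>S a = 0\<close> by (force simp: L_def)
  qed
  define U where "U = the_inv_into {a..b} S"
  have U_cont: "continuous_on {0..L} U"
    using continuous_on_inv_into[OF S_cont compact_Icc S_inj] by (simp add: S_image U_def)
  have U_range: "U s \<in> {a..b}" if "s \<in> {0..L}" for s
    using the_inv_into_into[OF S_inj _ order_refl, of s] that by (simp add: S_image U_def)
  have S_U: "S (U s) = s" if "s \<in> {0..L}" for s
    using f_the_inv_into_f[OF S_inj, of s] that by (simp add: S_image U_def)
  have U_S: "U (S u) = u" if "u \<in> {a..b}" for u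
    using the_inv_into_f_f[OF S_inj that] by (simp add: U_def)
  have "U 0 = a" "U L = b" using U_S[of a] U_S[of b] \<open>S a = 0\<close> \<open>a < b\<close> by (auto simp: L_def)
  have U_open: "U s \<in> {a<..<b}" if "s \<in> {0<..<L}" for s
  proof -
    have "S (U s) = s" "U s \<in> {a..b}" using S_U[of s] U_range[of s] that by auto
    moreover have "U s \<noteq> a" "U s \<noteq> b"
      using \<open>S (U s) = s\<close> \<open>S a = 0\<close> that by (auto simp: L_def)
    ultimately show ?thesis by auto
  qed
  show ?thesis
  proof (rule that[OF \<open>0 < L\<close> U_cont \<open>U 0 = a\<close> \<open>U L = b\<close> U_range U_open])
    fix s assume s: "s \<in> {0<..<L}"
    show "(U has_real_derivative inverse (T (U s))) (at s)"
    proof (rule DERIV_inverse_function[where f = S and a = 0 and b = L])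
      show "(S has_real_derivative T (U s)) (at (U s))" by (rule S_deriv_at[OF U_open[OF s]])
      show "T (U s) \<noteq> 0" using T(2)[of "U s"] U_open[OF s] by auto
      show "S (U y) = y" if "0 < y" "y < L" for y using S_U[of y] that by auto
      show "isCont U s" by (rule continuous_on_interior[OF U_cont]) (use s in auto)
    qed (use s in auto)
  qed
qed

lemma abs_sin_div_sqrt2_less_1: "\<bar>sin u / sqrt 2\<bar> < 1"
proof -
  have "\<bar>sin u / sqrt 2\<bar> \<le> 1 / sqrt 2"
    using abs_sin_le_one[of u] by (simp add: abs_div divide_right_mono)
  also have "1 / sqrt 2 < (1::real)" by simp
  finally show ?thesis .
qed

definition pendulum_angle :: "real \<Rightarrow> real" where
  "pendulum_angle u = 2 * arcsin (sin u / sqrt 2)"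

lemma pendulum_angle_deriv:
  "(pendulum_angle has_real_derivative 2 * cos u / sqrt (2 - (sin u)\<^sup>2)) (at u)"
proof -
  have "-1 < sin u / sqrt 2" "sin u / sqrt 2 < 1"
    using abs_sin_div_sqrt2_less_1[of u] unfolding abs_less_iff by linarith+
  moreover have "((\<lambda>u. sin u / sqrt 2) has_real_derivative cos u / sqrt 2) (at u)"
    by (rule DERIV_cdivide[OF DERIV_sin])
  ultimately have "((\<lambda>u. 2 * arcsin (sin u / sqrt 2)) has_real_derivative
      2 * (inverse (sqrt (1 - (sin u / sqrt 2)\<^sup>2)) * (cos u / sqrt 2))) (at u)"
    by (intro DERIV_cmult DERIV_chain2[OF DERIV_arcsin])
  moreover have "sqrt 2 * sqrt (1 - (sin u / sqrt 2)\<^sup>2) = sqrt (2 - (sin u)\<^sup>2)"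
    by (simp add: power_divide real_sqrt_mult[symmetric] right_diff_distrib)
  moreover have "cos u * 2 / sqrt 2 = cos u * sqrt 2"
    by (metis real_div_sqrt times_divide_eq_right zero_le_numeral)
  ultimately show ?thesis by (simp add: pendulum_angle_def[abs_def] field_simps)
qed

lemma cos_pendulum_angle: "cos (pendulum_angle u) = (cos u)\<^sup>2"
proof -
  have "sin (arcsin (sin u / sqrt 2)) = sin u / sqrt 2"
    using abs_sin_div_sqrt2_less_1[of u] unfolding abs_less_iff by (intro sin_arcsin) linarith+
  then show ?thesis by (simp add: pendulum_angle_def cos_double_sin power_divide cos_squared_eq)
qed

lemma pendulum_angle_minus: "pendulum_angle (- u) = - pendulum_angle u"
proof -
  have "-1 \<le> sin u / sqrt 2" "sin u / sqrt 2 \<le> 1"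
    using abs_sin_div_sqrt2_less_1[of u] unfolding abs_less_iff by linarith+
  then show ?thesis by (simp add: pendulum_angle_def arcsin_minus[OF \<open>-1 \<le> sin u / sqrt 2\<close>])
qed

lemma pendulum_angle_mono:
  assumes "- (pi / 2) \<le> u" "u \<le> v" "v \<le> pi / 2"
  shows "pendulum_angle u \<le> pendulum_angle v"
proof -
  have lo: "-1 \<le> sin u / sqrt 2" and hi: "sin v / sqrt 2 \<le> 1"
    using abs_sin_div_sqrt2_less_1[of u] abs_sin_div_sqrt2_less_1[of v]
    unfolding abs_less_iff by linarith+
  have "sin u / sqrt 2 \<le> sin v / sqrt 2"
    by (rule divide_right_mono[OF sin_monotone_2pi_le[OF assms]]) simp
  then show ?thesis unfolding pendulum_angle_def using arcsin_le_arcsin[OF lo _ hi] by simp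
qed

lemma pendulum_angle_attains:
  assumes "\<alpha> \<in> {0<..pi/2}"
  obtains \<beta> where "0 < \<beta>" "\<beta> \<le> pi / 2" "pendulum_angle \<beta> = \<alpha>"
proof -
  have "0 < sin (\<alpha> / 2)" using assms by (intro sin_gt_zero) auto
  have "sin (\<alpha> / 2) \<le> sin (pi / 4)" using assms by (intro sin_monotone_2pi_le) auto
  then have "sqrt 2 * sin (\<alpha> / 2) \<le> 1"
    by (simp add: sin_45 mult_left_mono[of _ "sqrt 2 / 2" "sqrt 2", simplified])
  moreover have "0 < sqrt 2 * sin (\<alpha> / 2)" using \<open>0 < sin (\<alpha> / 2)\<close> by simp
  ultimately show ?thesis
    using assms arcsin_less_arcsin[of 0 "sqrt 2 * sin (\<alpha> / 2)"] arcsin_le_arcsin[of _ 1]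
    by (intro that[of "arcsin (sqrt 2 * sin (\<alpha> / 2))"]) (auto simp: pendulum_angle_def arcsin_sin)
qed

lemma primitive_if_deriv_interior:
  fixes \<theta> f :: "real \<Rightarrow> real"
  assumes "continuous_on {a..b} \<theta>"
    and "\<And>s. s \<in> {a<..<b} \<Longrightarrow> (\<theta> has_real_derivative f s) (at s)"
    and "x \<in> {a..b}"
  shows "\<theta> x = \<theta> a + integral {a..x} f"
proof -
  have "(f has_integral \<theta> x - \<theta> a) {a..x}"
  proof (rule fundamental_theorem_of_calculus_interior)
    show "continuous_on {a..x} \<theta>" by (rule continuous_on_subset[OF assms(1)]) (use assms(3) in auto)
    show "(\<theta> has_vector_derivative f s) (at s)" if "s \<in> {a<..<x}" for s
      using assms(2)[of s] that assms(3) by (auto simp: has_real_derivative_iff_has_vector_derivative)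
  qed (use assms(3) in auto)
  then show ?thesis by (simp add: integral_unique)
qed

text \<open>Along a solution of \<open>\<theta>' = c sqrt (cos (\<theta> - \<alpha>))\<close> one has
  \<open>(sqrt (cos (\<theta> - \<alpha>)))' = - c sin (\<theta> - \<alpha>) / 2\<close>, and \<open>cos (\<theta> - \<alpha>)\<close> takes the same value at both ends.\<close>
lemma ode_integral_sin_diff_eq_0:
  assumes "0 \<le> L" "c \<noteq> 0"
    and \<theta>_cont: "continuous_on {0..L} \<theta>" and "\<theta> 0 = 0" "\<theta> L = 2 * \<alpha>"
    and ode: "\<And>s. s \<in> {0<..<L} \<Longrightarrow> (\<theta> has_real_derivative c * sqrt (cos (\<theta> s - \<alpha>))) (at s)"
    and cos_pos: "\<And>s. s \<in> {0<..<L} \<Longrightarrow> 0 < cos (\<theta> s - \<alpha>)"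
  shows "integral {0..L} (\<lambda>s. sin (\<theta> s - \<alpha>)) = 0"
proof -
  define w where "w s = sqrt (cos (\<theta> s - \<alpha>))" for s
  have w_deriv: "(w has_real_derivative - (c / 2) * sin (\<theta> s - \<alpha>)) (at s)" if s: "s \<in> {0<..<L}" for s
  proof -
    have "((\<lambda>s. cos (\<theta> s - \<alpha>)) has_real_derivative - sin (\<theta> s - \<alpha>) * (c * w s - 0)) (at s)"
      by (rule DERIV_chain2[OF DERIV_cos]) (intro derivative_intros ode[OF s, folded w_def])
    from DERIV_chain2[of sqrt _ "\<lambda>s. cos (\<theta> s - \<alpha>)", OF DERIV_real_sqrt[OF cos_pos[OF s]] this]
    have "(w has_real_derivative
        inverse (sqrt (cos (\<theta> s - \<alpha>))) / 2 * (- sin (\<theta> s - \<alpha>) * (c * w s - 0))) (at s)"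
      unfolding w_def[abs_def] .
    moreover have "inverse (sqrt (cos (\<theta> s - \<alpha>))) / 2 * (- sin (\<theta> s - \<alpha>) * (c * w s - 0))
        = - (c / 2) * sin (\<theta> s - \<alpha>)"
      using cos_pos[OF s] by (simp add: w_def field_simps)
    ultimately show ?thesis by metis
  qed
  have "continuous_on {0..L} w" unfolding w_def by (intro continuous_intros \<theta>_cont)
  then have "((\<lambda>s. - (c / 2) * sin (\<theta> s - \<alpha>)) has_integral w L - w 0) {0..L}"
    by (intro fundamental_theorem_of_calculus_interior)
       (use \<open>0 \<le> L\<close> w_deriv in \<open>auto simp: has_real_derivative_iff_has_vector_derivative\<close>)
  moreover have "w L = w 0" using \<open>\<theta> 0 = 0\<close> \<open>\<theta> L = 2 * \<alpha>\<close> by (simp add: w_def)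
  ultimately have "((\<lambda>s. - (c / 2) * sin (\<theta> s - \<alpha>)) has_integral 0) {0..L}" by simp
  then have "integral {0..L} (\<lambda>s. - (c / 2) * sin (\<theta> s - \<alpha>)) = 0" by (rule integral_unique)
  then show ?thesis using \<open>c \<noteq> 0\<close> by (simp only: integral_mult_right) simp
qed

lemma ode_solution_integrals:
  assumes \<alpha>: "\<alpha> \<in> {0<..pi/2}" and "0 \<le> L"
    and \<theta>_cont: "continuous_on {0..L} \<theta>" and "\<theta> 0 = 0" "\<theta> L = 2 * \<alpha>"
    and \<theta>_range: "\<And>s. s \<in> {0..L} \<Longrightarrow> \<theta> s \<in> {0..2*\<alpha>}"
    and ode: "\<And>s. s \<in> {0<..<L} \<Longrightarrow>
      (\<theta> has_real_derivative elastica_const \<alpha> * sqrt (cos (\<theta> s - \<alpha>))) (at s)"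
    and cos_pos: "\<And>s. s \<in> {0<..<L} \<Longrightarrow> 0 < cos (\<theta> s - \<alpha>)"
  defines "g \<equiv> \<lambda>s. elastica_const \<alpha> * sqrt (cos (\<theta> s - \<alpha>))"
  shows "\<And>x. x \<in> {0..L} \<Longrightarrow> \<theta> x = \<theta> 0 + integral {0..x} g"
    and "integral {0..L} (\<lambda>s. (g s)\<^sup>2) = 2 * sin \<alpha> * (elastica_const \<alpha>)\<^sup>2"
    and "integral {0..L} (\<lambda>s. cos (\<theta> s)) = sin (2 * \<alpha>)"
    and "integral {0..L} (\<lambda>s. sin (\<theta> s)) = 1 - cos (2 * \<alpha>)"
proof -
  define c where "c = elastica_const \<alpha>"
  have "1 \<le> c" using elastica_const_ge_1[OF \<alpha>] by (simp add: c_def)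
  have "0 < sin \<alpha>" using \<alpha> by (intro sin_gt_zero) auto
  have cos_nonneg: "0 \<le> cos (\<theta> s - \<alpha>)" if "s \<in> {0..L}" for s
    using \<theta>_range[OF that] \<alpha> by (intro cos_ge_zero) auto
  have g_cont: "continuous_on {0..L} g" unfolding g_def by (intro continuous_intros \<theta>_cont)
  have g_nonneg: "0 \<le> g s" if "s \<in> {0..L}" for s
    using cos_nonneg[OF that] \<open>1 \<le> c\<close> by (simp add: g_def c_def)
  show \<theta>_prim: "\<theta> x = \<theta> 0 + integral {0..x} g" if "x \<in> {0..L}" for x
    using primitive_if_deriv_interior[OF \<theta>_cont ode that] by (simp add: g_def)
  have "integral {0..L} (\<lambda>s. sqrt (cos (\<theta> s - \<alpha>)) * g s) = integral {0..2*\<alpha>} (\<lambda>t. sqrt (cos (t - \<alpha>)))"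
    using integral_comp_primitive(2)[OF \<open>0 \<le> L\<close> integrable_continuous_real[OF g_cont] g_nonneg \<theta>_prim,
        of "\<lambda>t. sqrt (cos (t - \<alpha>))"] \<open>\<theta> 0 = 0\<close> \<open>\<theta> L = 2 * \<alpha>\<close>
    by (simp add: continuous_intros)
  also have "\<dots> = 2 * sin \<alpha> * c" using \<open>0 < sin \<alpha>\<close> by (simp add: c_def elastica_const_def)
  finally have cross: "integral {0..L} (\<lambda>s. sqrt (cos (\<theta> s - \<alpha>)) * g s) = 2 * sin \<alpha> * c" .
  have "integral {0..L} (\<lambda>s. (g s)\<^sup>2) = integral {0..L} (\<lambda>s. c * (sqrt (cos (\<theta> s - \<alpha>)) * g s))"
    by (rule integral_cong) (simp add: g_def c_def power2_eq_square)
  then show g2: "integral {0..L} (\<lambda>s. (g s)\<^sup>2) = 2 * sin \<alpha> * (elastica_const \<alpha>)\<^sup>2"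
    using cross by (simp add: c_def power2_eq_square)
  have "integral {0..L} (\<lambda>s. (g s)\<^sup>2) = integral {0..L} (\<lambda>s. c\<^sup>2 * cos (\<theta> s - \<alpha>))"
    by (rule integral_cong) (use cos_nonneg in \<open>simp add: g_def c_def power_mult_distrib\<close>)
  then have cos_diff: "integral {0..L} (\<lambda>s. cos (\<theta> s - \<alpha>)) = 2 * sin \<alpha>"
    using g2 \<open>1 \<le> c\<close> by (simp add: c_def)
  have sin_diff: "integral {0..L} (\<lambda>s. sin (\<theta> s - \<alpha>)) = 0"
    by (rule ode_integral_sin_diff_eq_0[where c = c, OF \<open>0 \<le> L\<close> _ \<theta>_cont \<open>\<theta> 0 = 0\<close> \<open>\<theta> L = 2 * \<alpha>\<close>])
       (use ode cos_pos \<open>1 \<le> c\<close> in \<open>auto simp: c_def\<close>)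
  have int: "(\<lambda>s. cos (\<theta> s - \<alpha>)) integrable_on {0..L}" "(\<lambda>s. sin (\<theta> s - \<alpha>)) integrable_on {0..L}"
    by (intro integrable_continuous_real continuous_intros \<theta>_cont)+
  show "integral {0..L} (\<lambda>s. cos (\<theta> s)) = sin (2 * \<alpha>)"
    using integral_cos_sin_add(1)[OF int, of \<alpha>] cos_diff sin_diff by (simp add: sin_double)
  show "integral {0..L} (\<lambda>s. sin (\<theta> s)) = 1 - cos (2 * \<alpha>)"
    using integral_cos_sin_add(2)[OF int, of \<alpha>] cos_diff sin_diff
    by (simp add: cos_double_sin power2_eq_square)
qed

lemma admissible_if_solves_ode:
  assumes \<alpha>: "\<alpha> \<in> {0<..pi/2}" and "0 \<le> L"
    and \<theta>_cont: "continuous_on UNIV \<theta>" and "\<theta> 0 = 0" "\<theta> L = 2 * \<alpha>"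
    and \<theta>_range: "\<And>s. s \<in> {0..L} \<Longrightarrow> \<theta> s \<in> {0..2*\<alpha>}"
    and ode: "\<And>s. s \<in> {0<..<L} \<Longrightarrow>
      (\<theta> has_real_derivative elastica_const \<alpha> * sqrt (cos (\<theta> s - \<alpha>))) (at s)"
    and cos_pos: "\<And>s. s \<in> {0<..<L} \<Longrightarrow> 0 < cos (\<theta> s - \<alpha>)"
  defines "g \<equiv> \<lambda>s. elastica_const \<alpha> * sqrt (cos (\<theta> s - \<alpha>))"
  shows "admissible \<alpha> L \<theta> g" and "energy L g = sin \<alpha> * (elastica_const \<alpha>)\<^sup>2"
proof -
  have "continuous_on {0..L} \<theta>" using continuous_on_subset[OF \<theta>_cont] by blast
  note ints = ode_solution_integrals[OF \<alpha> \<open>0 \<le> L\<close> this \<open>\<theta> 0 = 0\<close> \<open>\<theta> L = 2 * \<alpha>\<close> \<theta>_range ode cos_pos]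
  have LBINT_eq: "(LBINT t=0..x. f t) = integral {0..x} f" if "continuous_on UNIV f" "0 \<le> x"
    for f :: "real \<Rightarrow> real" and x
    using interval_integral_0_eq_integral[OF that(2)]
      borel_integrable_atLeastAtMost'[OF continuous_on_subset[OF that(1)]] by simp
  have g_cont: "continuous_on UNIV g" unfolding g_def by (intro continuous_intros \<theta>_cont)
  have g2_cont: "continuous_on UNIV (\<lambda>s. (g s)\<^sup>2)" by (intro continuous_intros g_cont)
  have "0 \<le> g s" if "s \<in> {0..L}" for s
  proof -
    have "0 \<le> cos (\<theta> s - \<alpha>)" using \<theta>_range[OF that] \<alpha> by (intro cos_ge_zero) auto
    then show ?thesis using elastica_const_ge_1[OF \<alpha>] by (simp add: g_def)
  qed
  moreover have "\<theta> x = \<theta> 0 + integral {0..x} g" if "x \<in> {0..L}" for x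
    using ints(1)[of x] that unfolding g_def by simp
  ultimately show "admissible \<alpha> L \<theta> g"
    unfolding admissible_def H1_with_deriv_def
    using ints(3,4) LBINT_eq[OF g_cont] \<open>0 \<le> L\<close> \<open>\<theta> 0 = 0\<close> \<open>\<theta> L = 2 * \<alpha>\<close>
      LBINT_eq[of "\<lambda>s. cos (\<theta> s)" L] LBINT_eq[of "\<lambda>s. sin (\<theta> s)" L]
    by (auto intro!: borel_measurable_continuous_onI[OF g_cont] borel_integrable_atLeastAtMost'
        continuous_on_subset[OF g_cont] continuous_on_subset[OF g2_cont] continuous_intros \<theta>_cont)
  show "energy L g = sin \<alpha> * (elastica_const \<alpha>)\<^sup>2"
    using ints(2) LBINT_eq[OF g2_cont \<open>0 \<le> L\<close>] by (simp add: energy_def g_def)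
qed

text \<open>In the variable \<open>u\<close> with \<open>\<theta> - \<alpha> = pendulum_angle u\<close>, the equation \<open>\<theta>' = c sqrt (cos (\<theta> - \<alpha>))\<close>
  becomes \<open>u' = 1 / T u\<close> with \<open>T\<close> smooth and positive, even for \<open>\<alpha> = pi/2\<close>, where the
  original equation degenerates at the endpoints.\<close>
lemma elastica_competitor_exists:
  assumes \<alpha>: "\<alpha> \<in> {0<..pi/2}"
  obtains L \<theta> g where "0 < L" "admissible \<alpha> L \<theta> g" "energy L g = sin \<alpha> * (elastica_const \<alpha>)\<^sup>2"
proof -
  define c where "c = elastica_const \<alpha>"
  define T where "T u = 2 / (c * sqrt (2 - (sin u)\<^sup>2))" for u
  have "1 \<le> c" using elastica_const_ge_1[OF \<alpha>] by (simp add: c_def)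
  obtain \<beta> where \<beta>: "0 < \<beta>" "\<beta> \<le> pi / 2" "pendulum_angle \<beta> = \<alpha>"
    using pendulum_angle_attains[OF \<alpha>] by blast
  have p_range: "pendulum_angle u \<in> {-\<alpha>..\<alpha>}" if "u \<in> {-\<beta>..\<beta>}" for u
    using pendulum_angle_mono[of "-\<beta>" u] pendulum_angle_mono[of u \<beta>] pendulum_angle_minus[of \<beta>] that \<beta>
    by auto
  have sq_pos: "0 < 2 - (sin u)\<^sup>2" for u :: real using abs_square_le_1[of "sin u"] by simp
  then have T_cont: "continuous_on {-\<beta>..\<beta>} T" and T_pos: "\<And>u. 0 < T u"
    using \<open>1 \<le> c\<close> unfolding T_def by (auto intro!: continuous_intros simp: less_imp_neq[symmetric])
  obtain L U where "0 < L" and U_cont: "continuous_on {0..L} U" and "U 0 = - \<beta>" "U L = \<beta>"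
    and U_range: "\<And>s. s \<in> {0..L} \<Longrightarrow> U s \<in> {-\<beta>..\<beta>}"
    and U_open: "\<And>s. s \<in> {0<..<L} \<Longrightarrow> U s \<in> {-\<beta><..<\<beta>}"
    and U_deriv: "\<And>s. s \<in> {0<..<L} \<Longrightarrow> (U has_real_derivative inverse (T (U s))) (at s)"
    using inverse_of_primitive_exists[of "-\<beta>" \<beta> T] \<beta> T_cont T_pos by auto
  define \<theta> where "\<theta> s = \<alpha> + pendulum_angle (U (max 0 (min L s)))" for s
  have \<theta>_eq: "\<theta> s = \<alpha> + pendulum_angle (U s)" if "s \<in> {0..L}" for s
    using that by (simp add: \<theta>_def min_absorb2 max_absorb2)
  have "continuous_on UNIV pendulum_angle"
    using pendulum_angle_deriv by (intro continuous_at_imp_continuous_on) (auto intro: DERIV_isCont)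
  moreover have "continuous_on UNIV (\<lambda>s. U (max 0 (min L s)))"
    by (rule continuous_on_compose2[OF U_cont]) (use \<open>0 < L\<close> in \<open>auto intro!: continuous_intros\<close>)
  ultimately have "continuous_on UNIV (\<lambda>s. pendulum_angle (U (max 0 (min L s))))"
    by (rule continuous_on_compose2) simp
  then have \<theta>_cont: "continuous_on UNIV \<theta>" unfolding \<theta>_def by (intro continuous_intros)
  have cos_\<theta>: "cos (\<theta> s - \<alpha>) = (cos (U s))\<^sup>2" if "s \<in> {0..L}" for s
    using \<theta>_eq[OF that] by (simp add: cos_pendulum_angle)
  have U_cos_pos: "0 < cos (U s)" if "s \<in> {0<..<L}" for s
    using U_open[OF that] \<beta> by (intro cos_gt_zero_pi) auto
  have ode: "(\<theta> has_real_derivative c * sqrt (cos (\<theta> s - \<alpha>))) (at s)" if s: "s \<in> {0<..<L}" for s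
  proof -
    have "((\<lambda>s. \<alpha> + pendulum_angle (U s)) has_real_derivative
        0 + 2 * cos (U s) / sqrt (2 - (sin (U s))\<^sup>2) * inverse (T (U s))) (at s)"
      by (intro derivative_intros DERIV_chain2[OF pendulum_angle_deriv U_deriv[OF s]])
    moreover have "0 + 2 * cos (U s) / sqrt (2 - (sin (U s))\<^sup>2) * inverse (T (U s))
        = c * sqrt (cos (\<theta> s - \<alpha>))"
      using cos_\<theta>[of s] s U_cos_pos[OF s] sq_pos[of "U s"] by (simp add: T_def)
    ultimately have "((\<lambda>s. \<alpha> + pendulum_angle (U s)) has_real_derivative c * sqrt (cos (\<theta> s - \<alpha>))) (at s)"
      by simp
    then show ?thesis
      by (rule has_field_derivative_transform_within_open[where S = "{0<..<L}"])
         (use s \<theta>_eq in auto)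
  qed
  show ?thesis
  proof (rule that[OF \<open>0 < L\<close>])
    have "\<theta> 0 = 0" "\<theta> L = 2 * \<alpha>"
      using \<theta>_eq[of 0] \<theta>_eq[of L] \<open>0 < L\<close> \<open>U 0 = - \<beta>\<close> \<open>U L = \<beta>\<close> \<beta>(3) pendulum_angle_minus[of \<beta>]
      by auto
    moreover have "\<theta> s \<in> {0..2*\<alpha>}" if "s \<in> {0..L}" for s
      using p_range[OF U_range[OF that]] \<theta>_eq[OF that] by auto
    moreover have "0 < cos (\<theta> s - \<alpha>)" if "s \<in> {0<..<L}" for s
      using cos_\<theta>[of s] U_cos_pos[OF that] that by auto
    ultimately show "admissible \<alpha> L \<theta> (\<lambda>s. elastica_const \<alpha> * sqrt (cos (\<theta> s - \<alpha>)))"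
      "energy L (\<lambda>s. elastica_const \<alpha> * sqrt (cos (\<theta> s - \<alpha>))) = sin \<alpha> * (elastica_const \<alpha>)\<^sup>2"
      using admissible_if_solves_ode[OF \<alpha> _ \<theta>_cont] \<open>0 < L\<close> ode by (auto simp: c_def)
  qed
qed

section \<open>Minimizers\<close>

lemma minimizer_solves_ode:
  assumes \<alpha>: "\<alpha> \<in> {0<..pi/2}" and "is_minimizer \<alpha> L \<theta>"
  shows "0 < L" and "continuous_on {0..L} \<theta>" and "\<theta> 0 = 0" and "\<theta> L = 2 * \<alpha>"
    and "\<And>s. s \<in> {0..L} \<Longrightarrow> \<theta> s \<in> {0..2*\<alpha>}"
    and "integral {0..L} (\<lambda>s. cos (\<theta> s - \<alpha>)) = 2 * sin \<alpha>"
    and "\<And>x. x \<in> {0..L} \<Longrightarrow>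
           \<theta> x = integral {0..x} (\<lambda>s. elastica_const \<alpha> * sqrt (cos (\<theta> s - \<alpha>)))"
proof -
  obtain g where "0 < L" and adm: "admissible \<alpha> L \<theta> g"
    and min: "\<And>L' \<theta>' g'. 0 < L' \<Longrightarrow> admissible \<alpha> L' \<theta>' g' \<Longrightarrow> energy L g \<le> energy L' g'"
    using assms(2) unfolding is_minimizer_def by blast
  obtain L' \<theta>' g' where "0 < L'" "admissible \<alpha> L' \<theta>' g'"
    "energy L' g' = sin \<alpha> * (elastica_const \<alpha>)\<^sup>2"
    by (rule elastica_competitor_exists[OF \<alpha>])
  then have "energy L g \<le> sin \<alpha> * (elastica_const \<alpha>)\<^sup>2" using min by metis
  then show "\<theta> x = integral {0..x} (\<lambda>s. elastica_const \<alpha> * sqrt (cos (\<theta> s - \<alpha>)))"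
    if "x \<in> {0..L}" for x
    using admissible_energy_le_imp_ode[OF \<alpha> adm] \<open>0 < L\<close> that by simp
  show "0 < L" by fact
  show "continuous_on {0..L} \<theta>" "\<And>s. s \<in> {0..L} \<Longrightarrow> \<theta> s \<in> {0..2*\<alpha>}"
    using admissible_continuous_range[OF adm] \<open>0 < L\<close> by auto
  show "\<theta> 0 = 0" "\<theta> L = 2 * \<alpha>" using adm by (auto simp: admissible_def)
  show "integral {0..L} (\<lambda>s. cos (\<theta> s - \<alpha>)) = 2 * sin \<alpha>"
    using admissible_integral_cos_diff[OF adm] \<open>0 < L\<close> by simp
qed

lemma minimizer_curvature:
  assumes \<alpha>: "\<alpha> \<in> {0<..pi/2}" and "is_minimizer \<alpha> L \<theta>"
  defines "\<kappa> \<equiv> \<lambda>s. elastica_const \<alpha> * sqrt (cos (\<theta> s - \<alpha>))"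
  shows "\<And>s. s \<in> {0..L} \<Longrightarrow> (\<theta> has_real_derivative \<kappa> s) (at s within {0..L})"
    and "\<kappa> 0 = \<kappa> L"
    and "\<And>s. s \<in> {0..L} \<Longrightarrow> (\<kappa> s)\<^sup>2 = (elastica_const \<alpha>)\<^sup>2 * cos (\<theta> s - \<alpha>)"
    and "energy L \<kappa> = sin \<alpha> * (elastica_const \<alpha>)\<^sup>2"
proof -
  note \<theta> = minimizer_solves_ode[OF assms(1,2)]
  have \<kappa>_cont: "continuous_on {0..L} \<kappa>" unfolding \<kappa>_def by (intro continuous_intros \<theta>(2))
  show "(\<theta> has_real_derivative \<kappa> s) (at s within {0..L})" if "s \<in> {0..L}" for s
    by (rule has_field_derivative_transform_within[OF integral_has_real_derivative[OF \<kappa>_cont that],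
          where d = 1]) (use that \<theta>(7) in \<open>auto simp: \<kappa>_def\<close>)
  show "\<kappa> 0 = \<kappa> L" using \<theta>(3,4) by (simp add: \<kappa>_def)
  show \<kappa>_sq: "(\<kappa> s)\<^sup>2 = (elastica_const \<alpha>)\<^sup>2 * cos (\<theta> s - \<alpha>)" if "s \<in> {0..L}" for s
    using \<theta>(5)[OF that] \<alpha> by (simp add: \<kappa>_def power_mult_distrib cos_ge_zero)
  have "continuous_on {0..L} (\<lambda>s. (\<kappa> s)\<^sup>2)" by (intro continuous_intros \<kappa>_cont)
  then have "(LBINT s=0..L. (\<kappa> s)\<^sup>2) = integral {0..L} (\<lambda>s. (\<kappa> s)\<^sup>2)"
    using interval_integral_0_eq_integral[OF _ borel_integrable_atLeastAtMost'] \<theta>(1) by simp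
  also have "\<dots> = integral {0..L} (\<lambda>s. (elastica_const \<alpha>)\<^sup>2 * cos (\<theta> s - \<alpha>))"
    by (rule integral_cong) (rule \<kappa>_sq)
  finally show "energy L \<kappa> = sin \<alpha> * (elastica_const \<alpha>)\<^sup>2"
    using \<theta>(6) by (simp add: energy_def)
qed

theorem mainTheorem8:
  fixes \<alpha> L :: real and \<theta> :: "real \<Rightarrow> real"
  assumes "\<alpha> \<in> {0<..pi/2}"
    and "is_minimizer \<alpha> L \<theta>"
    and "\<exists>d0. (\<theta> has_real_derivative d0) (at 0 within {0..L}) \<and> d0 \<le> 1"
    and "\<exists>dL. (\<theta> has_real_derivative dL) (at L within {0..L}) \<and> dL \<le> 1"
  shows "\<exists>d. (\<forall>s\<in>{0..L}. (\<theta> has_real_derivative d s) (at s within {0..L}))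
           \<and> d 0 = d L
           \<and> (\<forall>s\<in>{0..L}. (1/2) * (d s)\<^sup>2 =
                 (1 / (2 * (sin \<alpha>)\<^sup>2)) * (LBINT t=0..\<alpha>. sqrt (cos t))\<^sup>2 * cos (\<theta> s - \<alpha>))
           \<and> energy L d = (1 / sin \<alpha>) * (LBINT t=0..\<alpha>. sqrt (cos t))\<^sup>2"
proof -
  note \<kappa> = minimizer_curvature[OF assms(1,2)]
  have "0 < sin \<alpha>" using assms(1) by (intro sin_gt_zero) auto
  have c: "elastica_const \<alpha> = (LBINT t=0..\<alpha>. sqrt (cos t)) / sin \<alpha>"
    using elastica_const_eq assms(1) by simp
  show ?thesis
  proof (intro exI[of _ "\<lambda>s. elastica_const \<alpha> * sqrt (cos (\<theta> s - \<alpha>))"] conjI ballI)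
    show "(\<theta> has_real_derivative elastica_const \<alpha> * sqrt (cos (\<theta> s - \<alpha>))) (at s within {0..L})"
      if "s \<in> {0..L}" for s
      using \<kappa>(1)[OF that] by simp
    show "(1/2) * (elastica_const \<alpha> * sqrt (cos (\<theta> s - \<alpha>)))\<^sup>2 =
        (1 / (2 * (sin \<alpha>)\<^sup>2)) * (LBINT t=0..\<alpha>. sqrt (cos t))\<^sup>2 * cos (\<theta> s - \<alpha>)"
      if "s \<in> {0..L}" for s
      using \<kappa>(3)[OF that] by (simp add: c power_divide)
    show "energy L (\<lambda>s. elastica_const \<alpha> * sqrt (cos (\<theta> s - \<alpha>)))
        = (1 / sin \<alpha>) * (LBINT t=0..\<alpha>. sqrt (cos t))\<^sup>2"
      using \<kappa>(4) \<open>0 < sin \<alpha>\<close> by (simp add: c power_divide power2_eq_square)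
  qed (use \<kappa>(2) in simp)
qed

end
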